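(* Let $n\in\mathbb{N}$, $d_0,d_1,\dots,d_n\in\mathbb{N}$, $f_i\in C(\mathbb{R}^{d_i},\mathbb{R}^{d_{i-1}})$ for $i\in\{1,\dots,n\}$, and $\phi_1,\dots,\phi_n\in\mathbf{N}$ with $f_i=\mathcal{R}(\phi_i)$ for all $i\in\{1,\dots,n\}$. Then $$\Big|\Big|\Big|\bigodot_{i=1}^n\mathcal{D}(\phi_i)\Big|\Big|\Big|\le\max\big\{|||\mathcal{D}(\phi_1)|||,\dots,|||\mathcal{D}(\phi_n)|||,2d_1,2d_2,\dots,2d_{n-1}\big\}.$$
   Context: $\mathbf{A}_k\colon\mathbb{R}^k\to\mathbb{R}^k$ is the componentwise ReLU. $\mathbf{D}=\bigcup_{H\in\mathbb{N}}\mathbb{N}^{H+2}$; $\mathbf{N}=\bigcup_{H\in\mathbb{N}}\bigcup_{(k_0,\dots,k_{H+1})\in\mathbb{N}^{H+2}}\prod_{m=1}^{H+1}(\mathbb{R}^{k_m\times k_{m-1}}\times\mathbb{R}^{k_m})$. For $\Phi=((W_1,B_1),\dots,(W_{H+1},B_{H+1}))$ with $W_m\in\mathbb{R}^{k_m\times k_{m-1}}$, $B_m\in\mathbb{R}^{k_m}$: $\mathcal{D}(\Phi)=(k_0,\dots,k_{H+1})\in\mathbf{D}$ and $\mathcal{R}(\Phi)\in C(\mathbb{R}^{k_0},\mathbb{R}^{k_{H+1}})$, $(\mathcal{R}(\Phi))(x_0)=W_{H+1}x_H+B_{H+1}$ with $x_m=\mathbf{A}_{k_m}(W_mx_{m-1}+B_m)$,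 $m=1,\dots,H$. For $x=(x_1,\dots,x_k)$, $|||x|||=\max_i|x_i|$. The operation $\odot\colon\mathbf{D}\times\mathbf{D}\to\mathbf{D}$: for $\alpha=(\alpha_0,\dots,\alpha_{H_1+1})$, $\beta=(\beta_0,\dots,\beta_{H_2+1})$, $\alpha\odot\beta=(\beta_0,\beta_1,\dots,\beta_{H_2},\beta_{H_2+1}+\alpha_0,\alpha_1,\dots,\alpha_{H_1+1})$; $\odot$ is associative and $\bigodot_{i=1}^n\alpha_i=\alpha_1\odot\alpha_2\odot\dots\odot\alpha_n$. *)

theory Defs
  imports Main "HOL-Library.Extended_Real"
begin

text \<open>A layer is a pair (W, B) with
  W a matrix given as its list of rows and B a bias vector.  A network is a pair
  (ks, Ls) of its layer dimensions ks = (k_0, ..., k_{H+1}) and its list of layers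
  Ls = ((W_1,B_1), ..., (W_{H+1},B_{H+1})).  Natural numbers N = {1,2,3,...}.\<close>

type_synonym layer = "real list list \<times> real list"
type_synonym network = "nat list \<times> layer list"

definition is_network :: "network \<Rightarrow> bool" where
  "is_network \<Phi> \<longleftrightarrow>
     (let ks = fst \<Phi>; Ls = snd \<Phi> in
        length Ls \<ge> 2 \<and> length ks = length Ls + 1 \<and> (\<forall>k\<in>set ks. k \<ge> 1) \<and>
        (\<forall>m < length Ls.
           length (fst (Ls ! m)) = ks ! (m + 1) \<and>
           (\<forall>row \<in> set (fst (Ls ! m)). length row = ks ! m) \<and>
           length (snd (Ls ! m)) = ks ! (m + 1)))"

definition arch :: "network \<Rightarrow> nat list" where
  "arch \<Phi> = fst \<Phi>"

definition relu :: "real \<Rightarrow> real" where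
  "relu x = max 0 x"

definition matvec :: "real list list \<Rightarrow> real list \<Rightarrow> real list" where
  "matvec W x = map (\<lambda>row. sum_list (map2 (*) row x)) W"

definition affine :: "layer \<Rightarrow> real list \<Rightarrow> real list" where
  "affine L x = map2 (+) (matvec (fst L) x) (snd L)"

fun realize_layers :: "layer list \<Rightarrow> real list \<Rightarrow> real list" where
  "realize_layers [] x = x"
| "realize_layers [L] x = affine L x"
| "realize_layers (L # L' # Ls) x = realize_layers (L' # Ls) (map relu (affine L x))"

text \<open>The realization R(Phi), meaningful on inputs of length k_0.\<close>
definition realization :: "network \<Rightarrow> real list \<Rightarrow> real list" where
  "realization \<Phi> = realize_layers (snd \<Phi>)"

definition arch_comp :: "nat list \<Rightarrow> nat list \<Rightarrow> nat list" (infixr "\<odot>" 70) where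
  "\<alpha> \<odot> \<beta> = butlast \<beta> @ [last \<beta> + hd \<alpha>] @ tl \<alpha>"

fun arch_comp_list :: "nat list list \<Rightarrow> nat list" where
  "arch_comp_list [] = []"
| "arch_comp_list [a] = a"
| "arch_comp_list (a # b # as) = a \<odot> arch_comp_list (b # as)"

definition maxnorm :: "nat list \<Rightarrow> nat" where
  "maxnorm x = Max (set x)"

end

theory Submission
  imports Defs
begin

text \<open>Each entry of D(phi_1) odot ... odot D(phi_n) is either an entry of some D(phi_i)
  or one of the n - 1 junction entries, where the output width d_i of phi_{i+1} is added
  to the input width d_i of phi_i, giving 2 d_i.\<close>

lemma set_arch_comp: "set (\<alpha> \<odot> \<beta>) \<subseteq> set \<alpha> \<union> set \<beta> \<union> {last \<beta> + hd \<alpha>}"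
  unfolding arch_comp_def by (cases \<alpha>) (auto dest: in_set_butlastD)

lemma last_arch_comp: "length \<alpha> \<ge> 2 \<Longrightarrow> last (\<alpha> \<odot> \<beta>) = last \<alpha>"
  unfolding arch_comp_def by (cases \<alpha>) auto

lemma arch_comp_list_nonempty: "as \<noteq> [] \<Longrightarrow> [] \<notin> set as \<Longrightarrow> arch_comp_list as \<noteq> []"
  by (induction as rule: arch_comp_list.induct) (auto simp: arch_comp_def)

lemma last_arch_comp_list:
  "as \<noteq> [] \<Longrightarrow> \<forall>a\<in>set as. length a \<ge> 2 \<Longrightarrow> last (arch_comp_list as) = last (hd as)"
  by (induction as rule: arch_comp_list.induct) (simp_all add: last_arch_comp)

lemma set_arch_comp_list:
  assumes "\<forall>a\<in>set as. length a \<ge> 2"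
  shows "set (arch_comp_list as) \<subseteq>
    (\<Union>a\<in>set as. set a) \<union> (\<lambda>(a, b). last b + hd a) ` set (zip as (tl as))"
  using assms
proof (induction as rule: arch_comp_list.induct)
  case (3 a b as)
  let ?junctions = "(\<lambda>(a, b). last b + hd a) ` set (zip (b # as) as)"
  have "last (arch_comp_list (b # as)) = last b"
    using "3.prems" by (simp add: last_arch_comp_list)
  then have "set (arch_comp_list (a # b # as)) \<subseteq>
      set a \<union> set (arch_comp_list (b # as)) \<union> {last b + hd a}"
    using set_arch_comp[of a "arch_comp_list (b # as)"] by simp
  moreover have "set (arch_comp_list (b # as)) \<subseteq> (\<Union>a\<in>set (b # as). set a) \<union> ?junctions"
    using "3.IH" "3.prems" by simp
  ultimately show ?case
    by auto
qed simp_all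

lemma maxnorm_arch_comp_list_le:
  assumes nonempty: "as \<noteq> []" and long: "\<forall>a\<in>set as. length a \<ge> 2"
    and entries: "\<forall>a\<in>set as. maxnorm a \<le> M"
    and junctions: "\<forall>(a, b)\<in>set (zip as (tl as)). last b + hd a \<le> M"
  shows "maxnorm (arch_comp_list as) \<le> M"
proof -
  have entry_le: "x \<le> M" if "a \<in> set as" "x \<in> set a" for a x
    using that entries unfolding maxnorm_def by (meson List.finite_set Max_ge order_trans)
  have "set (arch_comp_list as) \<subseteq> {..M}"
    using set_arch_comp_list[OF long] entry_le junctions by fastforce
  moreover have "arch_comp_list as \<noteq> []"
    using nonempty long by (intro arch_comp_list_nonempty) auto
  ultimately show ?thesis
    unfolding maxnorm_def by (simp add: subset_eq)
qed

lemma zip_tl_map_upt: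
  "zip (map f [m..<k]) (tl (map f [m..<k])) = map (\<lambda>i. (f i, f (Suc i))) [m..<k - 1]"
  by (rule nth_equalityI) (simp_all flip: map_tl)

lemma length_arch_ge_2: "is_network \<Phi> \<Longrightarrow> length (arch \<Phi>) \<ge> 2"
  unfolding is_network_def arch_def Let_def by simp

theorem lemma5p10:
  fixes n :: nat and d :: "nat \<Rightarrow> nat"
    and f :: "nat \<Rightarrow> real list \<Rightarrow> real list" and \<phi> :: "nat \<Rightarrow> network"
  assumes n: "n \<ge> 1"
    and d_pos: "\<forall>i \<le> n. d i \<ge> 1"
    and f_cont: "\<forall>i \<in> {1..n}. \<forall>x. length x = d i \<longrightarrow> length (f i x) = d (i - 1)"
    and net: "\<forall>i \<in> {1..n}. is_network (\<phi> i)"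
    and f_real: "\<forall>i \<in> {1..n}. hd (arch (\<phi> i)) = d i \<and> last (arch (\<phi> i)) = d (i - 1) \<and>
                   (\<forall>x. length x = d i \<longrightarrow> f i x = realization (\<phi> i) x)"
  shows "maxnorm (arch_comp_list (map (\<lambda>i. arch (\<phi> i)) [1..<n+1]))
         \<le> Max ((\<lambda>i. maxnorm (arch (\<phi> i))) ` {1..n} \<union> (\<lambda>i. 2 * d i) ` {1..<n})"
proof (rule maxnorm_arch_comp_list_le)
  let ?as = "map (\<lambda>i. arch (\<phi> i)) [1..<n+1]"
  let ?S = "(\<lambda>i. maxnorm (arch (\<phi> i))) ` {1..n} \<union> (\<lambda>i. 2 * d i) ` {1..<n}"
  show "?as \<noteq> []"
    using n by simp
  show "\<forall>a\<in>set ?as. length a \<ge> 2"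
    using net by (auto intro!: length_arch_ge_2)
  show "\<forall>a\<in>set ?as. maxnorm a \<le> Max ?S"
    by (auto intro!: Max_ge simp del: upt_Suc)
  show "\<forall>(a, b)\<in>set (zip ?as (tl ?as)). last b + hd a \<le> Max ?S"
    unfolding zip_tl_map_upt using f_real by (auto intro!: Max_ge simp: mult_2)
qed

end
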